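(* Let $q_1,\ldots,q_t$ be positive integers, $d=\sum_{k=1}^t q_k$, and let $G=K_{q_1,\ldots,q_t}$ be the complete multipartite graph of type $(q_1,\ldots,q_t)$. Then the Ehrhart polynomial of the edge polytope of $G$ is \[ i(\mathcal{P}_G,m)=f(m;d,d)-\sum_{k=1}^t f(m;d,q_k), \] where \[ f(m;d,j)=\sum_{k=1}^{j}p(m;d,k),\qquad p(m;d,j)=\binom{j+m-1}{j-1}\binom{d-j+m-1}{d-j}. \]
   Context: The complete multipartite graph $K_{q_1,\ldots,q_t}$ has vertex set a disjoint union $V_1\cup\cdots\cup V_t$ with $|V_i|=q_i$ and edge set $\{\{u,v\}: u\in V_i, v\in V_j, i\ne j\}$; label its vertices $1,\ldots,d$. For an edge $e=\{i,j\}$ set $\rho(e)=\mathbf{e}_i+\mathbf{e}_j\in\mathbb{R}^d$ ($\mathbf{e}_i$ the unit coordinate vectors). The edge polytope $\mathcal{P}_G$ is the convex hull of $\{\rho(e):e\in E(G)\}$. The Ehrhart polynomial $i(\mathcal{P},m)$ of an integral polytope $\mathcal{P}\subset\mathbb{R}^d$ is the polynomial with $i(\mathcal{P},m)=\#(m\mathcal{P}\cap\mathbb{Z}^d)$ for integers $m\ge0$. Binomial coefficients $\binom{a+m}{a}$ with $a\ge 0$ an integer are regarded as polynomials in $m$, namely $\prod_{i=1}^{a}(m+i)/a!$. *)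

theory Defs
  imports "HOL-Analysis.Analysis"
begin

text \<open>Vertices of the complete multipartite graph are the elements of a finite type 'n;
  col v gives the index of the col containing v. u v form an edge iff col u \<noteq> col v.\<close>

definition cmp_edge_vectors :: "('n::finite \<Rightarrow> nat) \<Rightarrow> (real ^ 'n) set" where
  "cmp_edge_vectors col =
     {axis u 1 + axis v 1 | u v. col u \<noteq> col v}"

definition edge_polytope :: "('n::finite \<Rightarrow> nat) \<Rightarrow> (real ^ 'n) set" where
  "edge_polytope col = convex hull (cmp_edge_vectors col)"

definition lattice_count :: "(real ^ 'n::finite) set \<Rightarrow> nat \<Rightarrow> nat" where
  "lattice_count P m = card {x \<in> (\<lambda>y. real m *\<^sub>R y) ` P. \<forall>i. x $ i \<in> \<int>}"

text \<open>p(m;d,j) and f(m;d,j), binomials read as polynomials in m.\<close>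
definition pp :: "nat \<Rightarrow> nat \<Rightarrow> nat \<Rightarrow> real" where
  "pp m d j = ((real j + real m - 1) gchoose (j - 1)) *
              ((real d - real j + real m - 1) gchoose (d - j))"

definition ff :: "nat \<Rightarrow> nat \<Rightarrow> nat \<Rightarrow> real" where
  "ff m d j = (\<Sum>k = 1..j. pp m d k)"

end

theory Submission
  imports Defs
begin

text \<open>A lattice point of m P_G is the multiplicity vector g of a multiset of m edges, i.e.
  a vector g of naturals with total 2m; since an edge meets every part at most once, g puts
  weight at most m on each part. Conversely such a g splits into m edges greedily: remove one
  vertex from a heaviest part and one from a heaviest other part. Hence i(P_G, m) counts the
  compositions of 2m into d parts that are not heavy (weight > m) on any part, and at most one
  part can be heavy. Splitting by the weight s > m on a part V of size j and telescoping in j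
  shows that f(m;d,j) counts the compositions heavy on V; for j = d these are all
  compositions.\<close>

definition multichoose :: "nat \<Rightarrow> nat \<Rightarrow> nat" where
  "multichoose k n = (n + k - 1) choose n"

lemma multichoose_0_left: "multichoose 0 n = (if n = 0 then 1 else 0)"
  by (simp add: multichoose_def)

lemma sum_multichoose: "(\<Sum>a\<le>s. multichoose q a) = multichoose (Suc q) s"
proof (cases q)
  case 0
  then have "(\<Sum>a\<le>s. multichoose q a) = 1" by (simp add: multichoose_0_left sum.delta)
  then show ?thesis using 0 by (simp add: multichoose_def)
next
  case (Suc r)
  have "(\<Sum>a\<le>s. multichoose q a) = (\<Sum>a\<le>s. (r + a) choose a)"
    using Suc by (simp add: multichoose_def add.commute)
  also have "\<dots> = Suc (r + s) choose s" by (rule sum_choose_lower)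
  finally show ?thesis using Suc by (simp add: multichoose_def add.commute)
qed

lemma sum_atLeastAtMost_reflect:
  assumes "a \<le> b"
  shows "(\<Sum>s\<in>{a..b}. f (b - s)) = (\<Sum>r\<le>b - a. f (r :: nat))"
  by (rule sum.reindex_bij_witness[of _ "\<lambda>r. b - r" "\<lambda>s. b - s"]) (use assms in auto)

definition weak_compositions :: "'a set \<Rightarrow> nat \<Rightarrow> ('a \<Rightarrow> nat) set" where
  "weak_compositions A n = {g. (\<forall>x. x \<notin> A \<longrightarrow> g x = 0) \<and> sum g A = n}"

lemma finite_weak_compositions:
  assumes "finite A"
  shows "finite (weak_compositions A n)"
proof (rule finite_subset[OF _ finite_set_of_finite_funs[OF assms, of "{..n}" 0]])
  show "weak_compositions A n \<subseteq> {f. \<forall>x. (x \<in> A \<longrightarrow> f x \<in> {..n}) \<and> (x \<notin> A \<longrightarrow> f x = 0)}"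
    using member_le_sum[OF _ _ assms] by (fastforce simp: weak_compositions_def)
qed simp

lemma card_weak_compositions:
  assumes "finite A"
  shows "card (weak_compositions A n) = multichoose (card A) n"
  using assms
proof (induction A arbitrary: n rule: finite_induct)
  case empty
  have "weak_compositions ({} :: 'a set) n = (if n = 0 then {\<lambda>_. 0} else {})"
    by (auto simp: weak_compositions_def)
  then show ?case by (cases "n = 0") (simp_all add: multichoose_0_left)
next
  case (insert a A)
  have "bij_betw (\<lambda>g. (g a, g(a := 0)))
          (weak_compositions (insert a A) n) (SIGMA i:{..n}. weak_compositions A (n - i))"
  proof (rule bij_betw_byWitness[where f' = "\<lambda>(i, h). h(a := i)"])
    have upd: "(\<Sum>x\<in>A. if x = a then i else g x) = sum g A" for g i
      using insert.hyps by (intro sum.cong) auto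
    then show "(\<lambda>g. (g a, g(a := 0))) ` weak_compositions (insert a A) n
                 \<subseteq> (SIGMA i:{..n}. weak_compositions A (n - i))"
      and "(\<lambda>(i, h). h(a := i)) ` (SIGMA i:{..n}. weak_compositions A (n - i))
                 \<subseteq> weak_compositions (insert a A) n"
      using insert.hyps by (auto simp: weak_compositions_def upd)
  qed (use insert.hyps in \<open>auto simp: weak_compositions_def\<close>)
  then have "card (weak_compositions (insert a A) n)
               = card (SIGMA i:{..n}. weak_compositions A (n - i))"
    by (rule bij_betw_same_card)
  also have "\<dots> = (\<Sum>i\<in>{0..n}. multichoose (card A) (n - i))"
    using insert by (simp add: card_SigmaI finite_weak_compositions atLeast0AtMost)
  also have "\<dots> = multichoose (card (insert a A)) n"
    using insert.hyps by (simp add: sum_atLeastAtMost_reflect sum_multichoose)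
  finally show ?case .
qed

lemma card_compositions_with_partial_sum:
  fixes V :: "'n::finite set"
  assumes "s \<le> N"
  shows "card {g::'n \<Rightarrow> nat. sum g UNIV = N \<and> sum g V = s}
           = multichoose (card V) s * multichoose (card (- V)) (N - s)"
proof -
  have split_UNIV: "sum g UNIV = sum g V + sum g (- V)" for g :: "'n \<Rightarrow> nat"
    using sum.union_disjoint[of V "- V" g] by (simp add: Un_commute)
  have "bij_betw (\<lambda>g. (\<lambda>x. if x \<in> V then g x else 0, \<lambda>x. if x \<in> V then 0 else g x))
     {g. sum g UNIV = N \<and> sum g V = s} (weak_compositions V s \<times> weak_compositions (- V) (N - s))"
  proof (rule bij_betw_byWitness[where f' = "\<lambda>(h1, h2) x. h1 x + h2 x"])
    show "\<forall>g\<in>{g. sum g UNIV = N \<and> sum g V = s}. (\<lambda>(h1, h2) x. h1 x + h2 x)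
            (\<lambda>x. if x \<in> V then g x else 0, \<lambda>x. if x \<in> V then 0 else g x) = g"
      by auto
    show "\<forall>p\<in>weak_compositions V s \<times> weak_compositions (- V) (N - s).
       (\<lambda>g. (\<lambda>x. if x \<in> V then g x else 0, \<lambda>x. if x \<in> V then 0 else g x))
         ((\<lambda>(h1, h2) x. h1 x + h2 x) p) = p"
      by (auto simp: weak_compositions_def fun_eq_iff)
    have "sum (\<lambda>x. if x \<in> V then g x else 0) V = sum g V"
      and "sum (\<lambda>x. if x \<in> V then 0 else g x) (- V) = sum g (- V)" for g :: "'n \<Rightarrow> nat"
      by (rule sum.cong; simp)+
    then show "(\<lambda>g. (\<lambda>x. if x \<in> V then g x else 0, \<lambda>x. if x \<in> V then 0 else g x)) `
       {g. sum g UNIV = N \<and> sum g V = s} \<subseteq> weak_compositions V s \<times> weak_compositions (- V) (N - s)"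
      using split_UNIV by (force simp: weak_compositions_def)
    show "(\<lambda>(h1, h2) x. h1 x + h2 x) ` (weak_compositions V s \<times> weak_compositions (- V) (N - s))
         \<subseteq> {g. sum g UNIV = N \<and> sum g V = s}"
    proof clarsimp
      fix h1 h2 assume "h1 \<in> weak_compositions V s" "h2 \<in> weak_compositions (- V) (N - s)"
      then have "sum (\<lambda>x. h1 x + h2 x) V = s" "sum (\<lambda>x. h1 x + h2 x) (- V) = N - s"
        by (auto simp: weak_compositions_def sum.distrib intro!: sum.neutral)
      then show "sum (\<lambda>x. h1 x + h2 x) UNIV = N \<and> sum (\<lambda>x. h1 x + h2 x) V = s"
        using split_UNIV[of "\<lambda>x. h1 x + h2 x"] assms by simp
    qed
  qed
  then show ?thesis
    by (simp add: bij_betw_same_card card_cartesian_product card_weak_compositions)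
qed

definition tail_convolution :: "nat \<Rightarrow> nat \<Rightarrow> nat \<Rightarrow> nat" where
  "tail_convolution m q e = (\<Sum>s\<in>{m+1..2*m}. multichoose q s * multichoose e (2*m - s))"

definition ff_nat :: "nat \<Rightarrow> nat \<Rightarrow> nat \<Rightarrow> nat" where
  "ff_nat m d j = (\<Sum>k = 1..j. ((k + m - 1) choose (k - 1)) * ((d - k + m - 1) choose (d - k)))"

lemma ff_eq_ff_nat:
  assumes "m \<ge> 1" "j \<le> d"
  shows "ff m d j = real (ff_nat m d j)"
proof -
  have "pp m d k = real (((k + m - 1) choose (k - 1)) * ((d - k + m - 1) choose (d - k)))"
    if "k \<in> {1..j}" for k
  proof -
    have "real k + real m - 1 = real (k + m - 1)"
      and "real d - real k + real m - 1 = real (d - k + m - 1)"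
      using that assms by (auto simp: of_nat_diff)
    then show ?thesis unfolding pp_def by (simp only: binomial_gbinomial of_nat_mult)
  qed
  then show ?thesis by (simp add: ff_def ff_nat_def of_nat_sum)
qed

lemma tail_convolution_Suc_left:
  assumes "m \<ge> 1"
  shows "tail_convolution m (Suc q) e
           = tail_convolution m q (Suc e) + multichoose (Suc q) m * multichoose (Suc e) (m - 1)"
proof -
  let ?I = "{m+1..2*m}" and ?c = "\<lambda>a s. multichoose q a * multichoose e (2*m - s)"
  have "tail_convolution m (Suc q) e = (\<Sum>s\<in>?I. \<Sum>a\<le>s. ?c a s)"
    by (simp add: tail_convolution_def sum_distrib_right flip: sum_multichoose)
  also have "\<dots> = (\<Sum>s\<in>?I. (\<Sum>a\<le>m. ?c a s) + (\<Sum>a\<in>{m+1..s}. ?c a s))"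
  proof (intro sum.cong refl)
    fix s assume "s \<in> ?I"
    then show "(\<Sum>a\<le>s. ?c a s) = (\<Sum>a\<le>m. ?c a s) + (\<Sum>a\<in>{m+1..s}. ?c a s)"
      using sum_up_index_split[of "\<lambda>a. ?c a s" m "s - m"] by simp
  qed
  also have "\<dots> = (\<Sum>a\<le>m. multichoose q a) * (\<Sum>s\<in>?I. multichoose e (2*m - s))
                  + (\<Sum>s\<in>?I. \<Sum>a\<in>{m+1..s}. ?c a s)"
    by (simp add: sum.distrib sum_distrib_left sum_distrib_right)
  also have "(\<Sum>s\<in>?I. multichoose e (2*m - s)) = multichoose (Suc e) (m - 1)"
    using assms by (simp add: sum_atLeastAtMost_reflect sum_multichoose)
  also have "(\<Sum>s\<in>?I. \<Sum>a\<in>{m+1..s}. ?c a s) = (\<Sum>s\<in>?I. \<Sum>a\<in>{a\<in>?I. a \<le> s}. ?c a s)"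
    by (intro sum.cong) auto
  also have "\<dots> = (\<Sum>a\<in>?I. \<Sum>s\<in>{s\<in>?I. a \<le> s}. ?c a s)"
    by (rule sum.swap_restrict) auto
  also have "\<dots> = (\<Sum>a\<in>?I. multichoose q a * (\<Sum>s\<in>{a..2*m}. multichoose e (2*m - s)))"
    by (intro sum.cong) (auto simp: sum_distrib_left intro!: sum.cong)
  also have "\<dots> = (\<Sum>a\<in>?I. multichoose q a * multichoose (Suc e) (2*m - a))"
    by (intro sum.cong) (auto simp: sum_atLeastAtMost_reflect sum_multichoose)
  finally show ?thesis by (simp add: tail_convolution_def sum_multichoose)
qed

lemma tail_convolution_eq_ff_nat:
  assumes "m \<ge> 1"
  shows "tail_convolution m q e = ff_nat m (q + e) q"
proof (induction q arbitrary: e)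
  case 0
  show ?case by (simp add: tail_convolution_def ff_nat_def multichoose_0_left)
next
  case (Suc q)
  have "multichoose (Suc q) m = (Suc q + m - 1) choose (Suc q - 1)"
    using binomial_symmetric[of q "q + m"] by (simp add: multichoose_def add.commute)
  moreover have "multichoose (Suc e) (m - 1) = (e + m - 1) choose e"
    using binomial_symmetric[of e "e + m - 1"] assms by (simp add: multichoose_def add.commute)
  ultimately show ?case
    using tail_convolution_Suc_left[OF assms] Suc.IH by (simp add: ff_nat_def)
qed

lemma finite_compositions: "finite {g :: 'n::finite \<Rightarrow> nat. sum g UNIV = N}"
  using finite_weak_compositions[of "UNIV :: 'n set" N] by (simp add: weak_compositions_def)

lemma card_compositions_heavy_on:
  fixes V :: "'n::finite set"
  assumes "m \<ge> 1"
  shows "card {g :: 'n \<Rightarrow> nat. sum g UNIV = 2*m \<and> m + 1 \<le> sum g V} = ff_nat m CARD('n) (card V)"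
proof -
  let ?S = "\<lambda>s. {g :: 'n \<Rightarrow> nat. sum g UNIV = 2*m \<and> sum g V = s}"
  have "sum g V \<le> 2*m" if "sum g UNIV = 2*m" for g :: "'n \<Rightarrow> nat"
    using sum_mono2[of UNIV V g] that by simp
  then have "{g :: 'n \<Rightarrow> nat. sum g UNIV = 2*m \<and> m + 1 \<le> sum g V} = (\<Union>s\<in>{m+1..2*m}. ?S s)"
    by auto
  also have "card \<dots> = (\<Sum>s\<in>{m+1..2*m}. card (?S s))"
    by (intro card_UN_disjoint) (auto intro: finite_subset[OF _ finite_compositions])
  also have "\<dots> = tail_convolution m (card V) (card (- V))"
    unfolding tail_convolution_def
    by (intro sum.cong) (simp_all add: card_compositions_with_partial_sum)
  also have "\<dots> = ff_nat m (card V + card (- V)) (card V)"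
    by (rule tail_convolution_eq_ff_nat[OF assms])
  also have "card V + card (- V) = CARD('n)"
    using card_Un_disjoint[of V "- V"] by (simp add: Un_commute)
  finally show ?thesis .
qed

definition balanced_compositions :: "('n::finite \<Rightarrow> nat) \<Rightarrow> nat \<Rightarrow> ('n \<Rightarrow> nat) set" where
  "balanced_compositions col m = {g. sum g UNIV = 2*m \<and> (\<forall>k. sum g {v. col v = k} \<le> m)}"

lemma card_balanced_compositions:
  fixes col :: "'n::finite \<Rightarrow> nat"
  assumes m: "m \<ge> 1" and col_less: "\<And>v. col v < t"
  shows "card (balanced_compositions col m) + (\<Sum>k<t. ff_nat m CARD('n) (card {v. col v = k}))
           = ff_nat m CARD('n) CARD('n)"
proof -
  define B where "B k = {g :: 'n \<Rightarrow> nat. sum g UNIV = 2*m \<and> m + 1 \<le> sum g {v. col v = k}}" for k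
  have heavy_unique: "k = j" if "g \<in> B k" "g \<in> B j" for g k j
  proof (rule ccontr)
    assume "k \<noteq> j"
    then have "sum g {v. col v = k} + sum g {v. col v = j} = sum g ({v. col v = k} \<union> {v. col v = j})"
      by (intro sum.union_disjoint[symmetric]) auto
    also have "\<dots> \<le> sum g UNIV" by (rule sum_mono2) auto
    finally show False using that by (simp add: B_def)
  qed
  have all_split: "{g :: 'n \<Rightarrow> nat. sum g UNIV = 2*m} = balanced_compositions col m \<union> (\<Union>k<t. B k)"
  proof (intro set_eqI iffI)
    fix g :: "'n \<Rightarrow> nat"
    assume "g \<in> {g. sum g UNIV = 2*m}"
    moreover have "{v. col v = k} = {}" if "\<not> k < t" for k
      using col_less that by auto
    then have "sum g {v. col v = k} \<le> m"
      if "\<forall>k<t. \<not> m + 1 \<le> sum g {v. col v = k}" for k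
      using that by (cases "k < t") auto
    ultimately show "g \<in> balanced_compositions col m \<union> (\<Union>k<t. B k)"
      by (auto simp: balanced_compositions_def B_def)
  qed (auto simp: balanced_compositions_def B_def)
  have "g \<notin> B k" if "g \<in> balanced_compositions col m" for g k
    using that by (auto simp: balanced_compositions_def B_def not_less_eq_eq)
  then have disjoint: "balanced_compositions col m \<inter> (\<Union>k<t. B k) = {}"
    by blast
  have finite: "finite (balanced_compositions col m)" "finite (B k)" for k
    by (auto simp: balanced_compositions_def B_def intro: finite_subset[OF _ finite_compositions])
  have "card (\<Union>k<t. B k) = (\<Sum>k<t. card (B k))"
    by (rule card_UN_disjoint) (use heavy_unique finite in auto)
  then have "card {g :: 'n \<Rightarrow> nat. sum g UNIV = 2*m}
               = card (balanced_compositions col m) + (\<Sum>k<t. card (B k))"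
    unfolding all_split using disjoint finite by (simp add: card_Un_disjoint)
  moreover have "{g :: 'n \<Rightarrow> nat. sum g UNIV = 2*m \<and> m + 1 \<le> sum g UNIV}
                   = {g. sum g UNIV = 2*m}"
    using m by auto
  moreover have "card (B k) = ff_nat m CARD('n) (card {v. col v = k})" for k
    unfolding B_def by (rule card_compositions_heavy_on[OF m])
  ultimately show ?thesis
    using card_compositions_heavy_on[OF m, of "UNIV :: 'n set"] by simp
qed

definition capped_simplex :: "('n::finite \<Rightarrow> nat) \<Rightarrow> (real ^ 'n) set" where
  "capped_simplex col = {y. (\<forall>i. 0 \<le> y $ i) \<and> (\<Sum>i\<in>UNIV. y $ i) = 2
                           \<and> (\<forall>k. (\<Sum>i\<in>{v. col v = k}. y $ i) \<le> 1)}"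

lemma convex_capped_simplex: "convex (capped_simplex col)"
proof -
  have lin: "linear (\<lambda>y :: real ^ 'n. y $ i)" "linear (\<lambda>y :: real ^ 'n. \<Sum>i\<in>S. y $ i)" for i S
    by (intro bounded_linear.linear bounded_linear_sum bounded_linear_vec_nth)+
  have "capped_simplex col = (\<Inter>i. (\<lambda>y. y $ i) -` {0..})
          \<inter> (\<lambda>y. \<Sum>i\<in>UNIV. y $ i) -` {2} \<inter> (\<Inter>k. (\<lambda>y. \<Sum>i\<in>{v. col v = k}. y $ i) -` {..1})"
    by (auto simp: capped_simplex_def)
  then show ?thesis
    by (simp only: convex_Int convex_INT convex_linear_vimage[OF lin(1)]
        convex_linear_vimage[OF lin(2)] convex_singleton convex_real_interval)
qed

lemma cmp_edge_vectors_subset_capped_simplex: "cmp_edge_vectors col \<subseteq> capped_simplex col"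
proof
  fix x assume "x \<in> cmp_edge_vectors col"
  then obtain u v where x: "x = axis u 1 + axis v 1" and uv: "col u \<noteq> col v"
    by (auto simp: cmp_edge_vectors_def)
  have "(\<Sum>i\<in>S. x $ i) = (if u \<in> S then 1 else 0) + (if v \<in> S then 1 else 0)" for S
    by (simp add: x axis_def sum.distrib)
  with uv show "x \<in> capped_simplex col"
    by (simp add: capped_simplex_def x axis_def)
qed

lemma edge_polytope_subset_capped_simplex: "edge_polytope col \<subseteq> capped_simplex col"
  unfolding edge_polytope_def
  by (intro hull_minimal cmp_edge_vectors_subset_capped_simplex convex_capped_simplex)

definition nat_vec :: "('n::finite \<Rightarrow> nat) \<Rightarrow> real ^ 'n" where
  "nat_vec g = (\<chi> i. real (g i))"

lemma inj_nat_vec: "inj nat_vec"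
  by (rule injI) (simp add: nat_vec_def vec_eq_iff fun_eq_iff)

lemma exists_transversal_edge:
  fixes g :: "'n::finite \<Rightarrow> nat" and col :: "'n \<Rightarrow> nat"
  assumes total: "sum g UNIV = 2 * Suc m" and bound: "\<And>k. sum g {v. col v = k} \<le> Suc m"
  obtains u v where "col u \<noteq> col v" "g u > 0" "g v > 0"
    "\<And>k. k \<noteq> col u \<Longrightarrow> k \<noteq> col v \<Longrightarrow> sum g {w. col w = k} \<le> m"
proof -
  define W where "W k = sum g {v. col v = k}" for k
  have positive: "\<exists>v\<in>S. g v > 0" if "sum g S > 0" for S
    using that by (metis gr0I sum.neutral less_irrefl)
  have split: "W k + sum g {v. col v \<noteq> k} = 2 * Suc m" for k
  proof -
    have "{v. col v = k} \<union> {v. col v \<noteq> k} = UNIV" "{v. col v = k} \<inter> {v. col v \<noteq> k} = {}"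
      by auto
    then show ?thesis
      using sum.union_disjoint[of "{v. col v = k}" "{v. col v \<noteq> k}" g] total by (simp add: W_def)
  qed
  txt \<open>Choose u in a full part if there is one, then v outside the part of u, again in a
    full part if there is one; at most two parts are full since their weights add up to 2m+2.\<close>
  obtain u where u: "g u > 0" "\<And>k. W k = Suc m \<Longrightarrow> W (col u) = Suc m"
  proof (cases "\<exists>k. W k = Suc m")
    case True
    then obtain k where "W k = Suc m" by blast
    with positive[of "{v. col v = k}"] that show ?thesis by (auto simp: W_def)
  next
    case False
    with positive[of UNIV] total that show ?thesis by auto
  qed
  obtain v where v: "col v \<noteq> col u" "g v > 0"
    "\<And>k. k \<noteq> col u \<Longrightarrow> W k = Suc m \<Longrightarrow> W (col v) = Suc m"
  proof (cases "\<exists>k. k \<noteq> col u \<and> W k = Suc m")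
    case True
    then obtain k where "k \<noteq> col u" "W k = Suc m" by blast
    with positive[of "{v. col v = k}"] that show ?thesis by (auto simp: W_def)
  next
    case False
    have "sum g {v. col v \<noteq> col u} > 0"
      using split[of "col u"] bound[of "col u"] by (simp add: W_def)
    with positive[of "{v. col v \<noteq> col u}"] False that show ?thesis by auto
  qed
  have "W k \<le> m" if "k \<noteq> col u" "k \<noteq> col v" for k
  proof (rule ccontr)
    assume "\<not> W k \<le> m"
    then have full: "W k = Suc m" using bound[of k] by (simp add: W_def)
    have "W (col u) + W (col v) + W k
            = sum g ({w. col w = col u} \<union> {w. col w = col v} \<union> {w. col w = k})"
      using that v(1) unfolding W_def by (subst sum.union_disjoint; (subst sum.union_disjoint)?) auto
    also have "\<dots> \<le> sum g UNIV" by (rule sum_mono2) auto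
    finally show False using u(2)[OF full] v(3)[OF that(1) full] full total by simp
  qed
  with u v that show ?thesis by (simp add: W_def)
qed

lemma balanced_composition_sum_of_edges:
  fixes g :: "'n::finite \<Rightarrow> nat"
  assumes "sum g UNIV = 2 * m" "\<And>k. sum g {v. col v = k} \<le> m"
  shows "\<exists>e. (\<forall>i<m. e i \<in> cmp_edge_vectors col) \<and> nat_vec g = (\<Sum>i<m. e i)"
  using assms
proof (induction m arbitrary: g)
  case 0
  then show ?case by (simp add: nat_vec_def vec_eq_iff)
next
  case (Suc m)
  obtain u v where uv: "col u \<noteq> col v" "g u > 0" "g v > 0"
    and others: "\<And>k. k \<noteq> col u \<Longrightarrow> k \<noteq> col v \<Longrightarrow> sum g {w. col w = k} \<le> m"
    using exists_transversal_edge[OF Suc.prems] by blast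
  define g' where "g' = g(u := g u - 1, v := g v - 1)"
  have g: "g = (\<lambda>w. g' w + (if w = u then 1 else 0) + (if w = v then 1 else 0))"
    using uv by (auto simp: g'_def)
  have sum_g: "sum g S = sum g' S + (if u \<in> S then 1 else 0) + (if v \<in> S then 1 else 0)" for S
    by (subst g) (simp add: sum.distrib sum.delta')
  have "sum g' UNIV = 2 * m"
    using sum_g[of UNIV] Suc.prems(1) by simp
  moreover have "sum g' {w. col w = k} \<le> m" for k
    using sum_g[of "{w. col w = k}"] Suc.prems(2)[of k] others[of k] uv(1)
    by (cases "k = col u \<or> k = col v") auto
  ultimately obtain e where e: "\<forall>i<m. e i \<in> cmp_edge_vectors col" "nat_vec g' = (\<Sum>i<m. e i)"
    using Suc.IH by blast
  have "nat_vec g = nat_vec g' + (axis u 1 + axis v 1)"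
    by (subst g) (simp add: nat_vec_def vec_eq_iff axis_def)
  then have "nat_vec g = (\<Sum>i<Suc m. (e(m := axis u 1 + axis v 1)) i)"
    using e(2) by simp
  moreover have "axis u 1 + axis v 1 \<in> cmp_edge_vectors col"
    using uv(1) by (auto simp: cmp_edge_vectors_def)
  ultimately show ?case
    using e(1) by (intro exI[of _ "e(m := axis u 1 + axis v 1)"]) (simp add: less_Suc_eq)
qed

lemma integral_points_dilated_edge_polytope:
  fixes col :: "'n::finite \<Rightarrow> nat"
  assumes m: "m \<ge> 1"
  shows "{x \<in> (\<lambda>y. real m *\<^sub>R y) ` edge_polytope col. \<forall>i. x $ i \<in> \<int>}
           = nat_vec ` balanced_compositions col m"
proof (intro equalityI subsetI)
  fix x assume "x \<in> {x \<in> (\<lambda>y. real m *\<^sub>R y) ` edge_polytope col. \<forall>i. x $ i \<in> \<int>}"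
  then obtain y where y: "y \<in> capped_simplex col" and x: "x = real m *\<^sub>R y"
    and integral: "\<forall>i. x $ i \<in> \<int>"
    using edge_polytope_subset_capped_simplex by blast
  define g where "g i = nat \<lfloor>x $ i\<rfloor>" for i
  have "real (g i) = x $ i" for i
    using y integral by (simp add: g_def x capped_simplex_def)
  then have "x = nat_vec g" and sum_g: "real (sum g S) = real m * (\<Sum>i\<in>S. y $ i)" for S
    by (simp_all add: nat_vec_def vec_eq_iff of_nat_sum x sum_distrib_left)
  moreover have "sum g UNIV = 2 * m"
  proof -
    have "real (sum g UNIV) = real (2 * m)"
      using sum_g[of UNIV] y by (simp add: capped_simplex_def)
    then show ?thesis by (simp only: of_nat_eq_iff)
  qed
  moreover have "sum g {v. col v = k} \<le> m" for k
  proof -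
    have "real m * (\<Sum>i\<in>{v. col v = k}. y $ i) \<le> real m * 1"
      using y by (intro mult_left_mono) (auto simp: capped_simplex_def)
    then have "real (sum g {v. col v = k}) \<le> real m"
      using sum_g by simp
    then show ?thesis by (simp only: of_nat_le_iff)
  qed
  ultimately show "x \<in> nat_vec ` balanced_compositions col m"
    by (auto simp: balanced_compositions_def)
next
  fix x assume "x \<in> nat_vec ` balanced_compositions col m"
  then obtain g where x: "x = nat_vec g" and "sum g UNIV = 2 * m" "\<And>k. sum g {v. col v = k} \<le> m"
    by (auto simp: balanced_compositions_def)
  then obtain e where e: "\<forall>i<m. e i \<in> cmp_edge_vectors col" "x = (\<Sum>i<m. e i)"
    using balanced_composition_sum_of_edges by blast
  have "(\<Sum>i<m. (1 / real m) *\<^sub>R e i) \<in> edge_polytope col"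
    unfolding edge_polytope_def
    using m e(1) by (intro convex_sum) (auto intro: hull_inc)
  moreover have "x = real m *\<^sub>R (\<Sum>i<m. (1 / real m) *\<^sub>R e i)"
    using m e(2) by (simp add: scaleR_sum_right)
  moreover have "\<forall>i. x $ i \<in> \<int>"
    by (simp add: x nat_vec_def)
  ultimately show "x \<in> {x \<in> (\<lambda>y. real m *\<^sub>R y) ` edge_polytope col. \<forall>i. x $ i \<in> \<int>}"
    by blast
qed

lemma lattice_count_edge_polytope:
  assumes "m \<ge> 1"
  shows "lattice_count (edge_polytope col) m = card (balanced_compositions col m)"
  unfolding lattice_count_def integral_points_dilated_edge_polytope[OF assms]
  by (intro card_image inj_on_subset[OF inj_nat_vec]) simp

lemma lattice_count_0: "lattice_count P 0 = (if P = {} then 0 else 1)"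
proof -
  have "{x \<in> (\<lambda>y. real 0 *\<^sub>R y) ` P. \<forall>i. x $ i \<in> \<int>} = (if P = {} then {} else {0})"
    by auto
  then show ?thesis by (simp add: lattice_count_def)
qed

lemma edge_polytope_eq_empty_iff: "edge_polytope col = {} \<longleftrightarrow> (\<forall>u v. col u = col v)"
proof -
  have "edge_polytope col = {} \<longleftrightarrow> cmp_edge_vectors col = {}"
    unfolding edge_polytope_def by (metis convex_hull_empty hull_subset subset_empty)
  then show ?thesis by (auto simp: cmp_edge_vectors_def)
qed

lemma pp_0:
  assumes "1 \<le> j" "j \<le> d"
  shows "pp 0 d j = (if j = d then 1 else 0)"
proof -
  have "real j + real 0 - 1 = real (j - 1)"
    using assms by (simp add: of_nat_diff)
  then have first: "(real j + real 0 - 1) gchoose (j - 1) = 1"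
    by (simp only: flip: binomial_gbinomial) simp
  show ?thesis
  proof (cases "j = d")
    case False
    then have "real d - real j + real 0 - 1 = real (d - j - 1)"
      using assms by (simp add: of_nat_diff)
    then have "(real d - real j + real 0 - 1) gchoose (d - j) = 0"
      using False assms by (simp only: flip: binomial_gbinomial) simp
    with False show ?thesis by (simp add: pp_def first)
  qed (use first in \<open>simp add: pp_def\<close>)
qed

lemma ff_0:
  assumes "1 \<le> d" "j \<le> d"
  shows "ff 0 d j = (if j = d then 1 else 0)"
proof -
  have "ff 0 d j = (\<Sum>i = 1..j. if i = d then 1 else 0)"
    unfolding ff_def using assms by (intro sum.cong) (auto simp: pp_0)
  with assms show ?thesis by (simp add: sum.delta')
qed

lemma ehrhart_edge_polytope_multipartite_pos:
  fixes col :: "'n::finite \<Rightarrow> nat"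
  assumes m: "m \<ge> 1" and col_less: "\<And>v. col v < t"
  shows "real (lattice_count (edge_polytope col) m)
           = ff m CARD('n) CARD('n) - (\<Sum>k<t. ff m CARD('n) (card {v. col v = k}))"
proof -
  have part_le: "card {v. col v = k} \<le> CARD('n)" for k
    by (rule card_mono) auto
  have "real (lattice_count (edge_polytope col) m)
          + (\<Sum>k<t. real (ff_nat m CARD('n) (card {v. col v = k}))) = real (ff_nat m CARD('n) CARD('n))"
    using card_balanced_compositions[OF m col_less]
    by (simp add: lattice_count_edge_polytope[OF m] flip: of_nat_add of_nat_sum)
  then show ?thesis
    by (simp add: ff_eq_ff_nat[OF m] part_le)
qed

lemma ehrhart_edge_polytope_multipartite_0:
  fixes col :: "'n::finite \<Rightarrow> nat"
  assumes col_less: "\<And>v. col v < t"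
  shows "real (lattice_count (edge_polytope col) 0)
           = ff 0 CARD('n) CARD('n) - (\<Sum>k<t. ff 0 CARD('n) (card {v. col v = k}))"
proof -
  have d: "1 \<le> CARD('n)"
    by (simp add: Suc_le_eq)
  have "ff 0 CARD('n) (card {v. col v = k}) = (if \<forall>v. col v = k then 1 else 0)" for k
  proof -
    have "card {v. col v = k} = CARD('n) \<longleftrightarrow> (\<forall>v. col v = k)"
      using card_subset_eq[of UNIV "{v. col v = k}"] by auto
    then show ?thesis
      using ff_0[OF d card_mono] by auto
  qed
  moreover have "(\<Sum>k<t. if \<forall>v. col v = k then 1 else 0 :: real)
                   = (if \<forall>u v. col u = col v then 1 else 0)"
  proof (cases "\<forall>u v. col u = col v")
    case True
    then have "(\<forall>v. col v = k) \<longleftrightarrow> k = col undefined" for k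
      by metis
    then show ?thesis
      using True col_less[of undefined] by (simp add: sum.delta')
  next
    case False
    then have not_constant: "\<not> (\<forall>v. col v = k)" for k
      by metis
    show ?thesis
      using False by (simp only: not_constant if_False if_P sum.neutral_const)
  qed
  ultimately show ?thesis
    using d by (simp add: lattice_count_0 edge_polytope_eq_empty_iff ff_0)
qed

theorem proposition1p3:
  fixes t :: nat and q :: "nat \<Rightarrow> nat" and col :: "'n::finite \<Rightarrow> nat" and m :: nat
  assumes qpos: "\<And>k. k < t \<Longrightarrow> q k > 0"
    and part_range: "\<And>v. col v < t"
    and part_card: "\<And>k. k < t \<Longrightarrow> card {v. col v = k} = q k"
  shows "real (lattice_count (edge_polytope col) m) =
           ff m CARD('n) CARD('n) - (\<Sum>k<t. ff m CARD('n) (q k))"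
proof -
  have "(\<Sum>k<t. ff m CARD('n) (q k)) = (\<Sum>k<t. ff m CARD('n) (card {v. col v = k}))"
    using part_card by simp
  then show ?thesis
    using ehrhart_edge_polytope_multipartite_pos[of m col t]
      ehrhart_edge_polytope_multipartite_0[of col t] part_range
    by (cases "m = 0") simp_all
qed

end
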